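(* Every $G$-invariant proper ideal of $\mathcal{A}(D)$ is contained in $\mathcal{V}(D)$.
   Context: Let $G$ be a group generated by a conjugacy class $D$ of involutions such that for all $d,e\in D$ the order of $de$ is $1$, $2$ or $3$. Lines of the Fischer space on $D$ are triples $\{d,e,d^e\}$ with $d,e\in D$ non-commuting. $\mathcal{A}(D)$ is the $\mathbb{F}_2$-vector space with basis $D$ (finite subsets of $D$ under symmetric difference), with bilinear product determined by $d*e=d+e+f$ if $\{d,e,f\}$ is a line and $d*e=0$ otherwise. $G$ acts on $\mathcal{A}(D)$ by linearly extending conjugation on $D$. The bilinear form $\langle\cdot,\cdot\rangle$ is determined by $\langle d,e\rangle=1$ if $d,e$ do not commute and $0$ otherwise; $\mathcal{V}(D)$ is its radical. *)

theory Defs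
  imports "HOL-Algebra.Algebra"
begin

text \<open>Elements of the F_2-vector space A(D): finite subsets of D (addition = symmetric difference).\<close>
definition algA :: "'a set \<Rightarrow> 'a set set" where
  "algA D = {a. a \<subseteq> D \<and> finite a}"

definition conjg :: "('a, 'b) monoid_scheme \<Rightarrow> 'a \<Rightarrow> 'a \<Rightarrow> 'a" where
  "conjg G d e = inv\<^bsub>G\<^esub> e \<otimes>\<^bsub>G\<^esub> d \<otimes>\<^bsub>G\<^esub> e"

definition commute :: "('a, 'b) monoid_scheme \<Rightarrow> 'a \<Rightarrow> 'a \<Rightarrow> bool" where
  "commute G d e \<longleftrightarrow> d \<otimes>\<^bsub>G\<^esub> e = e \<otimes>\<^bsub>G\<^esub> d"

definition basis_prod :: "('a, 'b) monoid_scheme \<Rightarrow> 'a \<Rightarrow> 'a \<Rightarrow> 'a set" where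
  "basis_prod G d e = (if commute G d e then {} else {d, e, conjg G d e})"

text \<open>Bilinear extension over F_2: coefficient of x is the parity of the number of contributing pairs.\<close>
definition algmult :: "('a, 'b) monoid_scheme \<Rightarrow> 'a set \<Rightarrow> 'a set \<Rightarrow> 'a set" where
  "algmult G a b = {x. odd (card {(d, e). d \<in> a \<and> e \<in> b \<and> x \<in> basis_prod G d e})}"

text \<open>Bilinear form over F_2 (True = 1, False = 0).\<close>
definition algform :: "('a, 'b) monoid_scheme \<Rightarrow> 'a set \<Rightarrow> 'a set \<Rightarrow> bool" where
  "algform G a b = odd (card {(d, e). d \<in> a \<and> e \<in> b \<and> \<not> commute G d e})"

definition radV :: "('a, 'b) monoid_scheme \<Rightarrow> 'a set \<Rightarrow> 'a set set" where
  "radV G D = {a \<in> algA D. \<forall>b \<in> algA D. \<not> algform G a b}"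

definition gact :: "('a, 'b) monoid_scheme \<Rightarrow> 'a \<Rightarrow> 'a set \<Rightarrow> 'a set" where
  "gact G g a = (\<lambda>d. g \<otimes>\<^bsub>G\<^esub> d \<otimes>\<^bsub>G\<^esub> inv\<^bsub>G\<^esub> g) ` a"

text \<open>Ideal of A(D): subspace (over F_2: contains 0, closed under +) absorbing products.\<close>
definition alg_ideal :: "('a, 'b) monoid_scheme \<Rightarrow> 'a set \<Rightarrow> 'a set set \<Rightarrow> bool" where
  "alg_ideal G D I \<longleftrightarrow> I \<subseteq> algA D \<and> {} \<in> I \<and> (\<forall>x\<in>I. \<forall>y\<in>I. (x - y) \<union> (y - x) \<in> I)
     \<and> (\<forall>a\<in>algA D. \<forall>x\<in>I. algmult G a x \<in> I \<and> algmult G x a \<in> I)"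

definition G_invariant :: "('a, 'b) monoid_scheme \<Rightarrow> 'a set set \<Rightarrow> bool" where
  "G_invariant G I \<longleftrightarrow> (\<forall>g\<in>carrier G. \<forall>x\<in>I. gact G g x \<in> I)"

definition fischer_setup :: "('a, 'b) monoid_scheme \<Rightarrow> 'a set \<Rightarrow> bool" where
  "fischer_setup G D \<longleftrightarrow> group G \<and>
     (\<exists>x\<in>carrier G. x \<noteq> \<one>\<^bsub>G\<^esub> \<and> x \<otimes>\<^bsub>G\<^esub> x = \<one>\<^bsub>G\<^esub> \<and>
        D = {g \<otimes>\<^bsub>G\<^esub> x \<otimes>\<^bsub>G\<^esub> inv\<^bsub>G\<^esub> g | g. g \<in> carrier G}) \<and>
     generate G D = carrier G \<and>
     (\<forall>d\<in>D. \<forall>e\<in>D. group.ord G (d \<otimes>\<^bsub>G\<^esub> e) \<in> {1, 2, 3})"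

end

theory Submission
  imports Defs
begin

text \<open>For an involution \<open>e \<in> D\<close> and any \<open>a \<in> \<A>(D)\<close> one has
  \<open>a * e = a + a\<^sup>e + \<langle>a, e\<rangle> e\<close>, as one checks on basis elements.
  Hence if an ideal \<open>I\<close> is \<open>G\<close>-invariant and contains some \<open>a\<close> with \<open>\<langle>a, e\<rangle> = 1\<close>,
  then \<open>e = a * e + a + a\<^sup>e \<in> I\<close>.  Since \<open>G\<close> acts transitively on the conjugacy
  class \<open>D\<close>, all of \<open>D\<close> then lies in \<open>I\<close>, so \<open>I = \<A>(D)\<close>.\<close>

lemma card_pairs_insert_left:
  assumes "finite a" "finite b" "z \<notin> a"
  shows "card {(d, e). d \<in> insert z a \<and> e \<in> b \<and> P d e} =
         card {(d, e). d \<in> {z} \<and> e \<in> b \<and> P d e} + card {(d, e). d \<in> a \<and> e \<in> b \<and> P d e}"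
proof -
  have "{(d, e). d \<in> insert z a \<and> e \<in> b \<and> P d e} =
        {(d, e). d \<in> {z} \<and> e \<in> b \<and> P d e} \<union> {(d, e). d \<in> a \<and> e \<in> b \<and> P d e}"
    by auto
  moreover have "finite {(d, e). d \<in> {z} \<and> e \<in> b \<and> P d e}"
    by (rule finite_subset[of _ "{z} \<times> b"]) (use assms in auto)
  moreover have "finite {(d, e). d \<in> a \<and> e \<in> b \<and> P d e}"
    by (rule finite_subset[of _ "a \<times> b"]) (use assms in auto)
  ultimately show ?thesis
    using assms(3) by (simp add: card_Un_disjoint disjoint_iff)
qed

lemma card_pairs_insert_right:
  assumes "finite a" "finite b" "z \<notin> b"
  shows "card {(d, e). d \<in> a \<and> e \<in> insert z b \<and> P d e} =
         card {(d, e). d \<in> a \<and> e \<in> {z} \<and> P d e} + card {(d, e). d \<in> a \<and> e \<in> b \<and> P d e}"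
proof -
  have "{(d, e). d \<in> a \<and> e \<in> insert z b \<and> P d e} =
        {(d, e). d \<in> a \<and> e \<in> {z} \<and> P d e} \<union> {(d, e). d \<in> a \<and> e \<in> b \<and> P d e}"
    by auto
  moreover have "finite {(d, e). d \<in> a \<and> e \<in> {z} \<and> P d e}"
    by (rule finite_subset[of _ "a \<times> {z}"]) (use assms in auto)
  moreover have "finite {(d, e). d \<in> a \<and> e \<in> b \<and> P d e}"
    by (rule finite_subset[of _ "a \<times> b"]) (use assms in auto)
  ultimately show ?thesis
    using assms(3) by (simp add: card_Un_disjoint disjoint_iff)
qed

lemma algmult_insert_left:
  assumes "finite a" "finite b" "z \<notin> a"
  shows "algmult G (insert z a) b = sym_diff (algmult G {z} b) (algmult G a b)"
  unfolding algmult_def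
  using card_pairs_insert_left[OF assms, of "\<lambda>d e. _ \<in> basis_prod G d e"] by auto

lemma algform_insert_left:
  assumes "finite a" "finite b" "z \<notin> a"
  shows "algform G (insert z a) b \<longleftrightarrow> algform G {z} b \<noteq> algform G a b"
  unfolding algform_def
  using card_pairs_insert_left[OF assms, of "\<lambda>d e. \<not> commute G d e"] by auto

lemma algform_insert_right:
  assumes "finite a" "finite b" "z \<notin> b"
  shows "algform G a (insert z b) \<longleftrightarrow> algform G a {z} \<noteq> algform G a b"
  unfolding algform_def
  using card_pairs_insert_right[OF assms, of "\<lambda>d e. \<not> commute G d e"] by auto

lemma algform_singletons: "algform G {d} {e} \<longleftrightarrow> \<not> commute G d e"
proof -
  have "{(x, y). x \<in> {d} \<and> y \<in> {e} \<and> \<not> commute G x y} =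
        (if commute G d e then {} else {(d, e)})"
    by auto
  then show ?thesis unfolding algform_def by simp
qed

lemma algmult_singletons: "algmult G {d} {e} = basis_prod G d e"
proof -
  have "\<And>x. {(u, v). u \<in> {d} \<and> v \<in> {e} \<and> x \<in> basis_prod G u v} =
             (if x \<in> basis_prod G d e then {(d, e)} else {})"
    by auto
  then show ?thesis unfolding algmult_def by simp
qed

lemma algform_ex_singleton_right:
  assumes "finite a" "finite b" "algform G a b"
  shows "\<exists>e\<in>b. algform G a {e}"
  using assms(2,3)
proof (induction b rule: finite_induct)
  case empty
  then show ?case unfolding algform_def by simp
next
  case (insert z b)
  then show ?case using algform_insert_right[OF assms(1) insert(1,2)] by auto
qed

lemma conj_eq_self_iff_commute:
  fixes G (structure)
  assumes "group G" "d \<in> carrier G" "e \<in> carrier G"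
  shows "e \<otimes> d \<otimes> inv e = d \<longleftrightarrow> commute G d e"
  using assms group.inv_solve_right'[of G d "e \<otimes> d" e] unfolding commute_def
  by (auto simp: monoid.m_closed group.is_monoid)

lemma basis_prod_involution:
  fixes G (structure)
  assumes "group G" "d \<in> carrier G" "e \<in> carrier G" "e \<otimes> e = \<one>" "\<not> commute G d e"
  shows "basis_prod G d e = {d, e, e \<otimes> d \<otimes> inv e}"
    and "d \<noteq> e" "e \<otimes> d \<otimes> inv e \<noteq> e"
proof -
  interpret group G by fact
  have "inv e = e"
    using assms(3,4) by (simp add: inv_equality)
  then show "basis_prod G d e = {d, e, e \<otimes> d \<otimes> inv e}"
    using assms(5) unfolding basis_prod_def conjg_def by simp
  show "d \<noteq> e"
    using assms(5) unfolding commute_def by auto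
  then show "e \<otimes> d \<otimes> inv e \<noteq> e"
    using assms(2,3) by (simp add: inv_solve_right')
qed

text \<open>\<open>gact G e\<close> conjugates by \<open>e\<^sup>-\<^sup>1\<close>, which equals \<open>e\<close> here,
  so \<open>gact G e a\<close> is the \<open>a\<^sup>e\<close> of the identity \<open>a * e = a + a\<^sup>e + \<langle>a, e\<rangle> e\<close>.\<close>

lemma algmult_involution_right:
  fixes G (structure)
  assumes G: "group G" and e: "e \<in> carrier G" "e \<otimes> e = \<one>"
    and "finite a" "a \<subseteq> carrier G"
  shows "algmult G a {e} = sym_diff (sym_diff a (gact G e a)) (if algform G a {e} then {e} else {})"
  using assms(4,5)
proof (induction a rule: finite_induct)
  case empty
  then show ?case unfolding algmult_def algform_def gact_def by simp
next
  case (insert z a)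
  have z: "z \<in> carrier G" using insert by auto
  have gact_insert: "gact G e (insert z a) = insert (e \<otimes> z \<otimes> inv e) (gact G e a)"
    unfolding gact_def by simp
  have fresh: "e \<otimes> z \<otimes> inv e \<notin> gact G e a"
  proof -
    interpret group G by (rule G)
    show ?thesis using insert(2,4) z e unfolding gact_def by auto
  qed
  have IH: "algmult G a {e} = sym_diff (sym_diff a (gact G e a)) (if algform G a {e} then {e} else {})"
    using insert by simp
  have mult: "algmult G (insert z a) {e} = sym_diff (basis_prod G z e) (algmult G a {e})"
    unfolding algmult_singletons[symmetric] by (rule algmult_insert_left) (use insert in auto)
  have form: "algform G (insert z a) {e} \<longleftrightarrow> (\<not> commute G z e) \<noteq> algform G a {e}"
    unfolding algform_singletons[symmetric] by (rule algform_insert_left) (use insert in auto)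
  show ?case
  proof (cases "commute G z e")
    case True
    then have "basis_prod G z e = {}" "e \<otimes> z \<otimes> inv e = z"
      using conj_eq_self_iff_commute[OF G z e(1)] unfolding basis_prod_def by simp_all
    then show ?thesis using True insert(2) fresh
      unfolding mult form IH gact_insert by (cases "algform G a {e}") auto
  next
    case False
    then have "e \<otimes> z \<otimes> inv e \<noteq> z"
      using conj_eq_self_iff_commute[OF G z e(1)] by simp
    then show ?thesis using False insert(2) fresh basis_prod_involution[OF G z e False]
      unfolding mult form IH gact_insert by (cases "algform G a {e}") auto
  qed
qed

lemma conjugacy_class_involution:
  fixes G (structure)
  assumes "group G" "x \<in> carrier G" "x \<otimes> x = \<one>" "g \<in> carrier G"
  shows "(g \<otimes> x \<otimes> inv g) \<otimes> (g \<otimes> x \<otimes> inv g) = \<one>"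
proof -
  interpret group G by fact
  have cancel: "inv g \<otimes> (g \<otimes> y) = y" if "y \<in> carrier G" for y
    using assms(4) that by (simp add: m_assoc[symmetric])
  have "x \<otimes> (x \<otimes> inv g) = inv g"
    using assms by (simp add: m_assoc[symmetric])
  then show ?thesis
    using assms cancel by (simp add: m_assoc)
qed

lemma G_invariant_singleton_conj:
  fixes G (structure)
  assumes "group G" "G_invariant G I" "{h \<otimes> x \<otimes> inv h} \<in> I"
    and "g \<in> carrier G" "h \<in> carrier G" "x \<in> carrier G"
  shows "{g \<otimes> x \<otimes> inv g} \<in> I"
proof -
  interpret group G by fact
  have cancel: "inv h \<otimes> (h \<otimes> y) = y" if "y \<in> carrier G" for y
    using assms(5) that by (simp add: m_assoc[symmetric])
  have "(g \<otimes> inv h) \<otimes> (h \<otimes> x \<otimes> inv h) \<otimes> inv (g \<otimes> inv h) = g \<otimes> x \<otimes> inv g"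
    using assms(4-6) cancel by (simp add: m_assoc inv_mult_group)
  then have "gact G (g \<otimes> inv h) {h \<otimes> x \<otimes> inv h} = {g \<otimes> x \<otimes> inv g}"
    unfolding gact_def by simp
  moreover have "gact G (g \<otimes> inv h) {h \<otimes> x \<otimes> inv h} \<in> I"
    using assms(2-5) unfolding G_invariant_def by simp
  ultimately show ?thesis by simp
qed

lemma alg_ideal_eq_algA_if_singletons:
  assumes "alg_ideal G D I" "\<And>d. d \<in> D \<Longrightarrow> {d} \<in> I"
  shows "I = algA D"
proof
  show "I \<subseteq> algA D" using assms(1) unfolding alg_ideal_def by simp
  show "algA D \<subseteq> I"
  proof
    fix a assume "a \<in> algA D"
    then have "finite a" "a \<subseteq> D" unfolding algA_def by auto
    then show "a \<in> I"
    proof (induction a rule: finite_induct)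
      case empty
      then show ?case using assms(1) unfolding alg_ideal_def by simp
    next
      case (insert d a)
      then have "{d} \<in> I" "a \<in> I" using assms(2) by auto
      then have "sym_diff {d} a \<in> I"
        using assms(1) unfolding alg_ideal_def by blast
      moreover have "sym_diff {d} a = insert d a" using insert(2) by auto
      ultimately show ?case by simp
    qed
  qed
qed

lemma G_invariant_ideal_singleton_if_algform:
  assumes G: "group G" and "alg_ideal G D I" "G_invariant G I"
    and "a \<in> I" "D \<subseteq> carrier G" "e \<in> D" "e \<otimes>\<^bsub>G\<^esub> e = \<one>\<^bsub>G\<^esub>" "algform G a {e}"
  shows "{e} \<in> I"
proof -
  have a: "finite a" "a \<subseteq> carrier G"
    using assms(2,4,5) unfolding alg_ideal_def algA_def by auto
  have e: "e \<in> carrier G" using assms(5,6) by auto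
  have "algmult G a {e} \<in> I"
    using assms(2,4,6) unfolding alg_ideal_def algA_def by simp
  moreover have "sym_diff a (gact G e a) \<in> I"
    using assms(2-4) e unfolding alg_ideal_def G_invariant_def by simp
  ultimately have "sym_diff (algmult G a {e}) (sym_diff a (gact G e a)) \<in> I"
    using assms(2) unfolding alg_ideal_def by simp
  moreover have "sym_diff (algmult G a {e}) (sym_diff a (gact G e a)) = {e}"
    unfolding algmult_involution_right[OF G e assms(7) a] using assms(8) by auto
  ultimately show ?thesis by simp
qed

theorem proposition2p4:
  fixes G :: "('a, 'b) monoid_scheme" and D :: "'a set" and I :: "'a set set"
  assumes "fischer_setup G D"
    and "alg_ideal G D I"
    and "G_invariant G I"
    and "I \<noteq> algA D"
  shows "I \<subseteq> radV G D"
proof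
  fix a assume "a \<in> I"
  from assms(1) have G: "group G" unfolding fischer_setup_def by simp
  interpret group G by (fact G)
  from assms(1) obtain x where x: "x \<in> carrier G" "x \<otimes>\<^bsub>G\<^esub> x = \<one>\<^bsub>G\<^esub>"
    and D: "D = {g \<otimes>\<^bsub>G\<^esub> x \<otimes>\<^bsub>G\<^esub> inv\<^bsub>G\<^esub> g | g. g \<in> carrier G}"
    unfolding fischer_setup_def by blast
  have "D \<subseteq> carrier G" unfolding D using x by auto
  have "a \<in> algA D" using \<open>a \<in> I\<close> assms(2) unfolding alg_ideal_def by auto
  show "a \<in> radV G D"
  proof (rule ccontr)
    assume "a \<notin> radV G D"
    then obtain b where "b \<in> algA D" "algform G a b"
      using \<open>a \<in> algA D\<close> unfolding radV_def by auto
    then obtain e where "e \<in> D" "algform G a {e}"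
      using algform_ex_singleton_right[of a b G] \<open>a \<in> algA D\<close> unfolding algA_def by auto
    moreover obtain h where h: "h \<in> carrier G" "e = h \<otimes>\<^bsub>G\<^esub> x \<otimes>\<^bsub>G\<^esub> inv\<^bsub>G\<^esub> h"
      using \<open>e \<in> D\<close> unfolding D by blast
    moreover have "e \<otimes>\<^bsub>G\<^esub> e = \<one>\<^bsub>G\<^esub>"
      unfolding h(2) using conjugacy_class_involution[OF G x h(1)] .
    ultimately have "{h \<otimes>\<^bsub>G\<^esub> x \<otimes>\<^bsub>G\<^esub> inv\<^bsub>G\<^esub> h} \<in> I"
      using G_invariant_ideal_singleton_if_algform[OF G assms(2,3) \<open>a \<in> I\<close> \<open>D \<subseteq> carrier G\<close>]
      by simp
    then have "{d} \<in> I" if "d \<in> D" for d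
      using that G_invariant_singleton_conj[OF G assms(3) _ _ h(1) x(1)] unfolding D by blast
    then show False
      using alg_ideal_eq_algA_if_singletons[OF assms(2)] assms(4) by blast
  qed
qed

end
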